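(* Let $f\in\mathbb F_q[X,Y]$ be a permutation group polynomial with permutation polynomial tuple $\underline\beta_f=(\beta_0,\dots,\beta_{q-1})$, and let $h$ be a permutation of $\mathbb F_q$ that intersects $\beta_i$ simply for every $i\in\{0,\dots,q-1\}$. Then $(h\beta_0,\dots,h\beta_{q-1})$ is a permutation polynomial tuple, and the LPP $g$ associated with it is a companion of $f$.
   Context: $q$ is a prime power and $\mathbb F_q=\{c_0,\dots,c_{q-1}\}$ is a fixed enumeration; $\mathfrak S_q$ is the symmetric group of permutations of $\mathbb F_q$, composed right to left, $(\sigma\tau)(x)=\sigma(\tau(x))$. Every function $\mathbb F_q^2\to\mathbb F_q$ is identified with the unique polynomial in $\mathbb F_q[X,Y]$ of degree $<q$ in each variable representing it. $f\in\mathbb F_q[X,Y]$ is a local permutation polynomial (LPP) if $x\mapsto f(x,y_0)$ and $y\mapsto f(x_0,y)$ are permutations of $\mathbb F_q$ for all $x_0,y_0\in\mathbb F_q$. A permutation polynomial tuple is $(\beta_0,\dots,\beta_{q-1})\in\mathfrak S_q^q$ such that $\beta_i^{-1}\beta_j$ has no fixed point whenever $i\ne j$. LPPs $f$ correspond bijectively to permutation polynomial tuples $\underline\beta_f=(\beta_0,\dots,\beta_{q-1})$ via $f(x,\beta_i(x))=c_i$ for all $x\in\mathbb F_q$ and all $i$. An LPP $f$ is a permutation group polynomial if $\{\beta_0,\dots,\beta_{q-1}\}$ is a subgroup of $\mathfrak S_q$. Two LPPs $f,g$ are orthogonal (companions of each other) if for every $(a,b)\in\mathbb F_q^2$ the system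 $f(X,Y)=a$, $g(X,Y)=b$ has exactly one solution in $\mathbb F_q^2$; a companion of $f$ is an LPP orthogonal to $f$. Two permutations $h_1,h_2$ of $\mathbb F_q$ intersect simply if there is exactly one $c\in\mathbb F_q$ with $h_1(c)=h_2(c)$. *)

theory Defs
  imports "HOL-Algebra.Bij" "HOL-Library.Cardinality"
begin

(* F_q is modelled by a finite field type 'a :: {finite, field}; q = CARD('a).
   Functions F_q^2 -> F_q (= reduced polynomials) are modelled as 'a => 'a => 'a. *)

definition is_LPP :: "('a \<Rightarrow> 'a \<Rightarrow> 'a) \<Rightarrow> bool" where
  "is_LPP f \<longleftrightarrow> (\<forall>y0. bij (\<lambda>x. f x y0)) \<and> (\<forall>x0. bij (\<lambda>y. f x0 y))"

definition is_ppt :: "nat \<Rightarrow> (nat \<Rightarrow> 'a \<Rightarrow> 'a) \<Rightarrow> bool" where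
  "is_ppt q B \<longleftrightarrow> (\<forall>i<q. bij (B i)) \<and>
     (\<forall>i<q. \<forall>j<q. i \<noteq> j \<longrightarrow> (\<forall>x. (inv_into UNIV (B i) \<circ> B j) x \<noteq> x))"

definition assoc_tuple :: "nat \<Rightarrow> (nat \<Rightarrow> 'a) \<Rightarrow> ('a \<Rightarrow> 'a \<Rightarrow> 'a) \<Rightarrow> (nat \<Rightarrow> 'a \<Rightarrow> 'a) \<Rightarrow> bool" where
  "assoc_tuple q c f B \<longleftrightarrow> (\<forall>i<q. \<forall>x. f x (B i x) = c i)"

definition is_perm_group_poly :: "nat \<Rightarrow> (nat \<Rightarrow> 'a) \<Rightarrow> ('a \<Rightarrow> 'a \<Rightarrow> 'a) \<Rightarrow> (nat \<Rightarrow> 'a \<Rightarrow> 'a) \<Rightarrow> bool" where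
  "is_perm_group_poly q c f B \<longleftrightarrow> is_LPP f \<and> is_ppt q B \<and> assoc_tuple q c f B \<and>
     subgroup (B ` {..<q}) (BijGroup (UNIV :: 'a set))"

definition orthogonal :: "('a \<Rightarrow> 'a \<Rightarrow> 'a) \<Rightarrow> ('a \<Rightarrow> 'a \<Rightarrow> 'a) \<Rightarrow> bool" where
  "orthogonal f g \<longleftrightarrow> (\<forall>a b. \<exists>!p. f (fst p) (snd p) = a \<and> g (fst p) (snd p) = b)"

definition companion :: "('a \<Rightarrow> 'a \<Rightarrow> 'a) \<Rightarrow> ('a \<Rightarrow> 'a \<Rightarrow> 'a) \<Rightarrow> bool" where
  "companion g f \<longleftrightarrow> is_LPP f \<and> is_LPP g \<and> orthogonal f g"

definition intersect_simply :: "('a \<Rightarrow> 'a) \<Rightarrow> ('a \<Rightarrow> 'a) \<Rightarrow> bool" where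
  "intersect_simply h1 h2 \<longleftrightarrow> bij h1 \<and> bij h2 \<and> (\<exists>!c. h1 c = h2 c)"

end

theory Submission
  imports Defs
begin

text \<open>
  Since \<open>f(x,y) = c\<^sub>i\<close> iff \<open>y = \<beta>\<^sub>i(x)\<close>, the system \<open>f = c\<^sub>i, g = c\<^sub>j\<close> has exactly one
  solution iff \<open>\<beta>\<^sub>i\<close> and \<open>h\<beta>\<^sub>j\<close> agree at exactly one point. Substituting \<open>z = \<beta>\<^sub>j(x)\<close>,
  this says that \<open>h\<close> and \<open>\<beta>\<^sub>i\<beta>\<^sub>j\<^sup>-\<^sup>1\<close> intersect simply, which is the hypothesis on \<open>h\<close>
  because the \<open>\<beta>\<close>'s form a group, so \<open>\<beta>\<^sub>i\<beta>\<^sub>j\<^sup>-\<^sup>1\<close> is some \<open>\<beta>\<^sub>k\<close>.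
\<close>

lemma ppt_index_unique:
  assumes "is_ppt q B" "i < q" "j < q" "B i x = B j x"
  shows "i = j"
proof (rule ccontr)
  assume "i \<noteq> j"
  then have "inv_into UNIV (B i) (B j x) \<noteq> x"
    using assms(1-3) by (auto simp: is_ppt_def)
  moreover have "inv_into UNIV (B i) (B i x) = x"
    using assms(1,2) by (simp add: is_ppt_def bij_is_inj)
  ultimately show False
    using assms(4) by simp
qed

lemma is_ppt_comp:
  assumes "bij h" "is_ppt q B"
  shows "is_ppt q (\<lambda>i. h \<circ> B i)"
  unfolding is_ppt_def
proof (intro conjI allI impI)
  fix i assume "i < q"
  then show "bij (h \<circ> B i)"
    using assms by (simp add: is_ppt_def bij_comp)
next
  fix i j x assume ij: "i < q" "j < q" "i \<noteq> j"
  show "(inv_into UNIV (h \<circ> B i) \<circ> (h \<circ> B j)) x \<noteq> x"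
  proof
    assume "(inv_into UNIV (h \<circ> B i) \<circ> (h \<circ> B j)) x = x"
    then have "h (B i x) = h (B j x)"
      using ij assms by (metis bij_comp bij_inv_eq_iff comp_apply is_ppt_def)
    then have "B i x = B j x"
      using assms(1) by (simp add: bij_is_inj inj_eq)
    then show False
      using ppt_index_unique[OF assms(2)] ij by blast
  qed
qed

lemma ppt_index_bij:
  fixes B :: "nat \<Rightarrow> 'a::finite \<Rightarrow> 'a"
  assumes "is_ppt CARD('a) B"
  shows "bij_betw (\<lambda>i. B i x) {..<CARD('a)} UNIV"
proof -
  have "inj_on (\<lambda>i. B i x) {..<CARD('a)}"
    using ppt_index_unique[OF assms] by (auto intro: inj_onI)
  moreover then have "(\<lambda>i. B i x) ` {..<CARD('a)} = UNIV"
    by (intro card_subset_eq) (auto simp: card_image)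
  ultimately show ?thesis
    by (simp add: bij_betw_def)
qed

lemma assoc_tuple_eq_iff:
  assumes "is_LPP f" "assoc_tuple q c f B" "i < q"
  shows "f x y = c i \<longleftrightarrow> y = B i x"
proof -
  have "inj (f x)"
    using assms(1) by (simp add: is_LPP_def bij_is_inj)
  moreover have "f x (B i x) = c i"
    using assms(2,3) by (simp add: assoc_tuple_def)
  ultimately show ?thesis
    by (metis inj_eq)
qed

lemma ppt_has_LPP:
  fixes B :: "nat \<Rightarrow> 'a::finite \<Rightarrow> 'a"
  assumes c: "bij_betw c {..<CARD('a)} (UNIV :: 'a set)" and B: "is_ppt CARD('a) B"
  shows "\<exists>g. is_LPP g \<and> assoc_tuple CARD('a) c g B"
proof -
  let ?I = "{..<CARD('a)}"
  define idx where "idx x = inv_into ?I (\<lambda>i. B i x)" for x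
  have idx_lt: "idx x y < CARD('a)" and B_idx: "B (idx x y) x = y" for x y
    using bij_betw_inv_into_right[OF ppt_index_bij[OF B]]
      bij_betw_apply[OF bij_betw_inv_into[OF ppt_index_bij[OF B]]]
    by (auto simp: idx_def)
  have idx_B: "idx x (B i x) = i" if "i < CARD('a)" for i x
    using that ppt_index_bij[OF B, of x] by (metis idx_def bij_betw_def inv_into_f_f lessThan_iff)
  have c_inj: "c i = c j \<longleftrightarrow> i = j" if "i < CARD('a)" "j < CARD('a)" for i j
    using that c by (auto simp: bij_betw_def dest: inj_onD)
  define g where "g x y = c (idx x y)" for x y
  have "inj (\<lambda>x. g x y)" for y
  proof (rule injI)
    fix x x' assume "g x y = g x' y"
    then have "idx x y = idx x' y"
      using c_inj idx_lt by (simp add: g_def)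
    then have "B (idx x y) x = B (idx x y) x'"
      using B_idx by metis
    then show "x = x'"
      using B idx_lt by (simp add: is_ppt_def bij_is_inj inj_eq)
  qed
  moreover have "inj (g x)" for x
    by (rule injI) (metis c_inj idx_lt B_idx g_def)
  ultimately have "is_LPP g"
    by (simp add: is_LPP_def bij_def finite_UNIV_inj_surj)
  moreover have "assoc_tuple CARD('a) c g B"
    by (simp add: assoc_tuple_def g_def idx_B)
  ultimately show ?thesis
    by blast
qed

lemma orthogonal_if_tuples_meet_once:
  assumes c: "bij_betw c {..<q} UNIV"
    and f: "is_LPP f" "assoc_tuple q c f B"
    and g: "is_LPP g" "assoc_tuple q c g C"
    and once: "\<And>i j. i < q \<Longrightarrow> j < q \<Longrightarrow> \<exists>!x. B i x = C j x"
  shows "orthogonal f g"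
  unfolding orthogonal_def
proof (intro allI)
  fix a b
  obtain i j where ij: "i < q" "j < q" "c i = a" "c j = b"
    using bij_betw_imp_surj_on[OF c] by (metis UNIV_I imageE lessThan_iff)
  have solves: "f x y = a \<and> g x y = b \<longleftrightarrow> B i x = C j x \<and> y = B i x" for x y
    using assoc_tuple_eq_iff[OF f] assoc_tuple_eq_iff[OF g] ij by auto
  obtain x0 where x0: "B i x0 = C j x0" and unique: "\<And>x. B i x = C j x \<Longrightarrow> x = x0"
    using once[OF ij(1,2)] by blast
  show "\<exists>!p. f (fst p) (snd p) = a \<and> g (fst p) (snd p) = b"
  proof (rule ex1I[of _ "(x0, B i x0)"])
    show "f (fst (x0, B i x0)) (snd (x0, B i x0)) = a \<and> g (fst (x0, B i x0)) (snd (x0, B i x0)) = b"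
      using solves x0 by simp
  next
    fix p :: "'a \<times> 'a"
    assume "f (fst p) (snd p) = a \<and> g (fst p) (snd p) = b"
    then have "B i (fst p) = C j (fst p)" "snd p = B i (fst p)"
      using solves by blast+
    then show "p = (x0, B i x0)"
      using unique by (metis prod.collapse)
  qed
qed

lemma subgroup_BijGroup_comp_inv:
  assumes "subgroup S (BijGroup UNIV)" "\<sigma> \<in> S" "\<tau> \<in> S"
  shows "\<sigma> \<circ> inv_into UNIV \<tau> \<in> S"
proof -
  have bij: "\<sigma> \<in> Bij UNIV" "\<tau> \<in> Bij UNIV"
    using subgroup.subset[OF assms(1)] assms(2,3) by (auto simp: BijGroup_def)
  have "inv\<^bsub>BijGroup UNIV\<^esub> \<tau> = inv_into UNIV \<tau>"
    using inv_BijGroup[OF bij(2)] by (simp add: restrict_UNIV)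
  then have "inv_into UNIV \<tau> \<in> S" "inv_into UNIV \<tau> \<in> Bij UNIV"
    using subgroup.m_inv_closed[OF assms(1,3)] bij(2) bij_imp_bij_inv
    by (auto simp: Bij_def)
  then show ?thesis
    using subgroup.m_closed[OF assms(1,2)] bij(1)
    by (fastforce simp: BijGroup_def compose_def restrict_UNIV o_def)
qed

lemma ex1_bij_reindex:
  assumes "bij \<tau>"
  shows "(\<exists>!x. P (\<tau> x)) \<longleftrightarrow> (\<exists>!z. P z)"
proof
  assume "\<exists>!x. P (\<tau> x)"
  then obtain x where "P (\<tau> x)" "\<And>y. P (\<tau> y) \<Longrightarrow> y = x"
    by blast
  then show "\<exists>!z. P z"
    using assms by (metis bij_inv_eq_iff)
next
  assume "\<exists>!z. P z"
  then show "\<exists>!x. P (\<tau> x)"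
    using assms by (metis bij_inv_eq_iff)
qed

lemma ex1_meet_shift:
  assumes "bij \<tau>"
  shows "(\<exists>!x. \<sigma> x = h (\<tau> x)) \<longleftrightarrow> (\<exists>!z. h z = (\<sigma> \<circ> inv_into UNIV \<tau>) z)"
proof -
  have "(\<exists>!x. \<sigma> x = h (\<tau> x)) \<longleftrightarrow> (\<exists>!x. h (\<tau> x) = (\<sigma> \<circ> inv_into UNIV \<tau>) (\<tau> x))"
    using assms by (simp add: bij_is_inj eq_commute)
  also have "\<dots> \<longleftrightarrow> (\<exists>!z. h z = (\<sigma> \<circ> inv_into UNIV \<tau>) z)"
    using ex1_bij_reindex[OF assms] .
  finally show ?thesis .
qed

theorem lemma4p4:
  fixes c :: "nat \<Rightarrow> 'a :: {finite, field}"
    and f :: "'a \<Rightarrow> 'a \<Rightarrow> 'a"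
    and B :: "nat \<Rightarrow> 'a \<Rightarrow> 'a"
    and h :: "'a \<Rightarrow> 'a"
  assumes enum: "bij_betw c (lessThan CARD('a)) (UNIV :: 'a set)"
    and pgp: "is_perm_group_poly CARD('a) c f B"
    and hperm: "bij h"
    and simp: "\<forall>i<CARD('a). intersect_simply h (B i)"
  shows "is_ppt CARD('a) (\<lambda>i. h \<circ> B i)
    \<and> (\<exists>g. is_LPP g \<and> assoc_tuple CARD('a) c g (\<lambda>i. h \<circ> B i))
    \<and> (\<forall>g. is_LPP g \<and> assoc_tuple CARD('a) c g (\<lambda>i. h \<circ> B i) \<longrightarrow> companion g f)"
proof -
  let ?q = "CARD('a)"
  have f: "is_LPP f" "assoc_tuple ?q c f B" and B: "is_ppt ?q B"
    and grp: "subgroup (B ` {..<?q}) (BijGroup UNIV)"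
    using pgp by (auto simp: is_perm_group_poly_def)
  have hB: "is_ppt ?q (\<lambda>i. h \<circ> B i)"
    using is_ppt_comp[OF hperm B] .
  have meet_once: "\<exists>!x. B i x = (h \<circ> B j) x" if ij: "i < ?q" "j < ?q" for i j
  proof -
    have "B i \<circ> inv_into UNIV (B j) \<in> B ` {..<?q}"
      using subgroup_BijGroup_comp_inv[OF grp] ij by blast
    then obtain k where k: "k < ?q" "B k = B i \<circ> inv_into UNIV (B j)"
      by auto
    have "\<exists>!z. h z = B k z"
      using simp k(1) by (simp add: intersect_simply_def)
    then have "\<exists>!z. h z = (B i \<circ> inv_into UNIV (B j)) z"
      by (simp only: k(2))
    moreover have "bij (B j)"
      using B ij by (simp add: is_ppt_def)
    ultimately show ?thesis
      using ex1_meet_shift[of "B j" "B i" h] by simp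
  qed
  have "companion g f" if "is_LPP g" "assoc_tuple ?q c g (\<lambda>i. h \<circ> B i)" for g
    unfolding companion_def
    using f(1) that orthogonal_if_tuples_meet_once[OF enum f that meet_once] by blast
  then show ?thesis
    using hB ppt_has_LPP[OF enum hB] by blast
qed

end
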